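(* Let $\alpha=(\alpha_1,\dots,\alpha_n)$ be a vector of positive integers and let $\varphi$ be a smooth function on $\mathbb{R}^n$ with $\operatorname{supp}\varphi\subset[-1,1]^n$. Consider $$I(\lambda)=\int_{\mathbb{R}^n}e^{i\lambda x_1^{\alpha_1}\cdots x_n^{\alpha_n}}\varphi(x_1,\dots,x_n)\,\mathrm{d}x_1\cdots\mathrm{d}x_n ,$$ and set $d=\max_j\alpha_j$ and $M=\#\{j:\alpha_j=d\}$. Then there is a constant $C_\varphi$ such that, for all sufficiently large $\lambda$, $$|I(\lambda)|\le C_\varphi\,\lambda^{-1/d}\ln^{M-1}\lambda .$$
   Context: The constant $C_\varphi$ depends on $\varphi$ and $\alpha$ but not on $\lambda$. *)

theory Defs
  imports "HOL-Analysis.Analysis"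
begin

fun iter_dderiv :: "'a::real_normed_vector list \<Rightarrow> ('a \<Rightarrow> 'b::real_normed_vector) \<Rightarrow> 'a \<Rightarrow> 'b" where
  "iter_dderiv [] f = f"
| "iter_dderiv (v # vs) f = (\<lambda>x. frechet_derivative (iter_dderiv vs f) (at x) v)"

definition smooth :: "('a::real_normed_vector \<Rightarrow> 'b::real_normed_vector) \<Rightarrow> bool" where
  "smooth f \<longleftrightarrow> (\<forall>vs. \<forall>x. iter_dderiv vs f differentiable (at x))"

definition osc_integral :: "('n::finite \<Rightarrow> nat) \<Rightarrow> (real^'n \<Rightarrow> complex) \<Rightarrow> real \<Rightarrow> complex" where
  "osc_integral \<alpha> \<phi> lam =
     integral UNIV (\<lambda>x. exp (\<i> * complex_of_real (lam * (\<Prod>j\<in>UNIV. (x $ j) ^ \<alpha> j))) * \<phi> x)"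

end

theory Submission
  imports Defs
begin

(* Integrate first in a coordinate x_k with alpha_k = d = max alpha.  For fixed remaining
   coordinates the phase is mu t^d with mu = lam * prod_{j ~= k} x_j^alpha_j, and van der Corput's
   estimate (integration by parts away from |t| <= |mu|^(-1/d)), interpolated with the trivial
   bound, gives |int e^(i mu t^d) psi(t) dt| <= C |mu|^(-theta/d) for every theta in [0,1].
   The resulting weight prod_{j ~= k} |x_j|^(-alpha_j theta/d) is integrable over the cube, with
   factors 2/(1 - alpha_j theta/d) that are at most 2d when alpha_j < d and equal 2/(1 - theta)
   when alpha_j = d.  Taking theta = 1 - 1/ln lam makes each of the remaining M - 1 maximal
   coordinates contribute 2 ln lam, while lam^(-theta/d) exceeds lam^(-1/d) only by e^(1/d). *)

lemma has_real_derivative_inverse_power: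
  assumes "t \<noteq> 0"
  shows "((\<lambda>t::real. 1 / t ^ (d - 1)) has_real_derivative - real (d - 1) / t ^ d) (at t)"
proof (cases d)
  case (Suc m)
  have "((\<lambda>t::real. inverse (t ^ m)) has_real_derivative - (real m * t ^ (m - 1)) / (t ^ m)\<^sup>2) (at t)"
    using assms by (auto intro!: derivative_eq_intros simp: field_simps power2_eq_square)
  moreover have "- (real m * t ^ (m - 1)) / (t ^ m)\<^sup>2 = - real m / t ^ Suc m"
    using assms by (cases m) (simp_all add: field_simps power2_eq_square)
  ultimately show ?thesis
    using Suc by (simp add: inverse_eq_divide)
qed simp

lemma has_vector_derivative_exp_i_power:
  "((\<lambda>t. exp (\<i> * complex_of_real (\<mu> * t ^ d))) has_vector_derivative
      \<i> * complex_of_real (\<mu> * (real d * t ^ (d - 1))) * exp (\<i> * complex_of_real (\<mu> * t ^ d))) (at t)"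
proof -
  have "((\<lambda>t. \<mu> * t ^ d) has_real_derivative \<mu> * (real d * t ^ (d - 1))) (at t)"
    by (auto intro!: derivative_eq_intros)
  then have "((\<lambda>t. \<i> * complex_of_real (\<mu> * t ^ d)) has_vector_derivative
               \<i> * complex_of_real (\<mu> * (real d * t ^ (d - 1)))) (at t)"
    by (intro has_vector_derivative_mult_right has_vector_derivative_of_real)
  from field_vector_diff_chain_at[OF this DERIV_exp] show ?thesis
    by (simp add: o_def)
qed

lemma norm_integral_le_by_antiderivative:
  fixes f e F :: "real \<Rightarrow> 'a::banach"
  assumes "a \<le> b"
    and F: "\<And>t. t \<in> {a..b} \<Longrightarrow> (F has_vector_derivative f t + e t) (at t within {a..b})"
    and e: "e integrable_on {a..b}" and g: "g integrable_on {a..b}"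
    and e_le: "\<And>t. t \<in> {a..b} \<Longrightarrow> norm (e t) \<le> g t"
  shows "norm (integral {a..b} f) \<le> norm (F a) + norm (F b) + integral {a..b} g"
proof -
  have "((\<lambda>t. f t + e t) has_integral F b - F a) {a..b}"
    using assms(1) F by (rule fundamental_theorem_of_calculus)
  from has_integral_diff[OF this integrable_integral[OF e]]
  have "integral {a..b} f = F b - F a - integral {a..b} e"
    by (simp add: integral_unique)
  moreover have "norm (integral {a..b} e) \<le> integral {a..b} g"
    using e g e_le by (rule integral_norm_bound_integral)
  ultimately show ?thesis
    by (smt (verit) norm_triangle_ineq4 norm_triangle_ineq)
qed

lemma has_integral_inverse_power_majorant:
  assumes \<delta>: "0 < \<delta>" "\<delta> \<le> 1"
  shows "((\<lambda>t. 1 / \<delta> ^ (d - 1) + real (d - 1) / t ^ d) has_integral (2 - \<delta>) / \<delta> ^ (d - 1) - 1) {\<delta>..1}"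
proof -
  define G where "G t = t / \<delta> ^ (d - 1) - 1 / t ^ (d - 1)" for t :: real
  have "(G has_real_derivative 1 / \<delta> ^ (d - 1) - - real (d - 1) / t ^ d) (at t)" if "t \<in> {\<delta>..1}" for t
    unfolding G_def using that \<delta>
    by (intro DERIV_diff DERIV_cdivide DERIV_ident has_real_derivative_inverse_power) auto
  then have "((\<lambda>t. 1 / \<delta> ^ (d - 1) + real (d - 1) / t ^ d) has_integral G 1 - G \<delta>) {\<delta>..1}"
    using \<delta> by (intro fundamental_theorem_of_calculus)
      (auto simp: has_real_derivative_iff_has_vector_derivative intro: has_vector_derivative_at_within)
  then show ?thesis
    by (simp add: G_def diff_divide_distrib algebra_simps)
qed

lemma has_vector_derivative_exp_i_power_antiderivative:
  fixes \<psi> :: "real \<Rightarrow> complex"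
  assumes t: "t > 0" and \<mu>: "\<mu> \<noteq> 0" and d: "d \<ge> 1" and \<psi>': "(\<psi> has_vector_derivative \<psi>') (at t)"
  defines "K \<equiv> 1 / (\<i> * complex_of_real (\<mu> * real d))"
  shows "((\<lambda>s. exp (\<i> * complex_of_real (\<mu> * s ^ d)) * (\<psi> s * K * complex_of_real (1 / s ^ (d - 1))))
           has_vector_derivative
             exp (\<i> * complex_of_real (\<mu> * t ^ d)) * \<psi> t
             + exp (\<i> * complex_of_real (\<mu> * t ^ d))
               * (\<psi>' * K * complex_of_real (1 / t ^ (d - 1)) + \<psi> t * K * complex_of_real (- real (d - 1) / t ^ d)))
         (at t)"
proof -
  define \<Phi> where "\<Phi> s = exp (\<i> * complex_of_real (\<mu> * s ^ d))" for s
  define r where "r s = 1 / s ^ (d - 1)" for s :: real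
  define r' where "r' = - real (d - 1) / t ^ d"
  define c where "c = \<i> * complex_of_real (\<mu> * (real d * t ^ (d - 1)))"
  define h where "h s = \<psi> s * K * complex_of_real (r s)" for s
  define h' where "h' = \<psi>' * K * complex_of_real (r t) + \<psi> t * K * complex_of_real r'"
  have "(r has_real_derivative r') (at t)"
    unfolding r_def r'_def using t by (intro has_real_derivative_inverse_power) simp
  then have "(h has_vector_derivative h') (at t)"
    unfolding h_def h'_def by (auto intro!: derivative_eq_intros \<psi>')
  moreover have "(\<Phi> has_vector_derivative c * \<Phi> t) (at t)"
    unfolding \<Phi>_def c_def by (rule has_vector_derivative_exp_i_power)
  ultimately have "((\<lambda>s. \<Phi> s * h s) has_vector_derivative \<Phi> t * h' + c * \<Phi> t * h t) (at t)"
    by (intro has_vector_derivative_mult)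
  moreover have "c * K * complex_of_real (r t) = 1"
    using t d \<mu> by (simp add: c_def K_def r_def field_simps)
  then have "c * \<Phi> t * h t = \<Phi> t * \<psi> t"
    by (simp add: h_def) (metis (no_types, lifting) mult.assoc)
  ultimately have "((\<lambda>s. \<Phi> s * h s) has_vector_derivative \<Phi> t * \<psi> t + \<Phi> t * h') (at t)"
    by (simp add: add.commute)
  then show ?thesis
    unfolding \<Phi>_def h_def h'_def r_def r'_def .
qed

lemma norm_integral_exp_i_power_tail:
  fixes \<psi> \<psi>' :: "real \<Rightarrow> complex"
  assumes d: "d \<ge> 1" and \<mu>: "\<mu> \<noteq> 0" and \<delta>: "0 < \<delta>" "\<delta> \<le> 1"
    and \<psi>': "\<And>t. t \<in> {\<delta>..1} \<Longrightarrow> (\<psi> has_vector_derivative \<psi>' t) (at t)"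
    and cont: "continuous_on {\<delta>..1} \<psi>'"
    and bound: "\<And>t. t \<in> {\<delta>..1} \<Longrightarrow> norm (\<psi> t) \<le> A \<and> norm (\<psi>' t) \<le> A"
  shows "norm (integral {\<delta>..1} (\<lambda>t. exp (\<i> * complex_of_real (\<mu> * t ^ d)) * \<psi> t))
           \<le> 4 * (A / (\<bar>\<mu>\<bar> * \<delta> ^ (d - 1)))"
proof -
  define \<Phi> where "\<Phi> t = exp (\<i> * complex_of_real (\<mu> * t ^ d))" for t
  define K :: complex where "K = 1 / (\<i> * complex_of_real (\<mu> * real d))"
  define F where "F t = \<Phi> t * (\<psi> t * K * complex_of_real (1 / t ^ (d - 1)))" for t
  define e where "e t = \<Phi> t * (\<psi>' t * K * complex_of_real (1 / t ^ (d - 1))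
                                 + \<psi> t * K * complex_of_real (- real (d - 1) / t ^ d))" for t
  define g where "g t = A / \<bar>\<mu>\<bar> * (1 / \<delta> ^ (d - 1) + real (d - 1) / t ^ d)" for t
  define B where "B = A / (\<bar>\<mu>\<bar> * \<delta> ^ (d - 1))"
  have A: "0 \<le> A"
    using bound[of 1] \<delta> by (smt (verit) atLeastAtMost_iff norm_ge_zero)
  have r_bound: "0 < t" "1 / t ^ (d - 1) \<le> 1 / \<delta> ^ (d - 1)" if "t \<in> {\<delta>..1}" for t
    using that \<delta> by (auto intro!: divide_left_mono power_mono)
  have K: "norm K \<le> 1 / \<bar>\<mu>\<bar>"
    using d \<mu> by (simp add: K_def norm_divide norm_mult abs_mult field_simps)
  have "continuous_on {\<delta>..1} \<psi>"
    using \<psi>' by (metis continuous_on_vector_derivative has_vector_derivative_at_within)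
  then have "continuous_on {\<delta>..1} e"
    unfolding e_def \<Phi>_def using r_bound \<delta> by (intro continuous_intros cont) auto
  then have e_int: "e integrable_on {\<delta>..1}"
    by (rule integrable_continuous_real)
  have e_le: "norm (e t) \<le> g t" if t: "t \<in> {\<delta>..1}" for t
  proof -
    have "norm (e t) \<le> norm (\<psi>' t * K * complex_of_real (1 / t ^ (d - 1)))
                         + norm (\<psi> t * K * complex_of_real (- real (d - 1) / t ^ d))"
      unfolding e_def \<Phi>_def norm_mult[of "exp _"] norm_exp_i_times mult_1_left by (rule norm_triangle_ineq)
    also have "\<dots> = norm (\<psi>' t) * norm K * (1 / t ^ (d - 1)) + norm (\<psi> t) * norm K * (real (d - 1) / t ^ d)"
      using r_bound[OF t] by (simp add: norm_mult norm_divide norm_power)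
    also have "\<dots> \<le> A * (1 / \<bar>\<mu>\<bar>) * (1 / \<delta> ^ (d - 1)) + A * (1 / \<bar>\<mu>\<bar>) * (real (d - 1) / t ^ d)"
      using r_bound[OF t] bound[OF t] K A by (intro add_mono mult_mono) auto
    finally show ?thesis
      by (simp add: g_def algebra_simps)
  qed
  have g: "(g has_integral A / \<bar>\<mu>\<bar> * ((2 - \<delta>) / \<delta> ^ (d - 1) - 1)) {\<delta>..1}"
    unfolding g_def using \<delta> by (intro has_integral_mult_right has_integral_inverse_power_majorant)
  have "A / \<bar>\<mu>\<bar> * ((2 - \<delta>) / \<delta> ^ (d - 1) - 1) \<le> A / \<bar>\<mu>\<bar> * (2 / \<delta> ^ (d - 1))"
    using A \<delta> divide_right_mono[of "2 - \<delta>" 2 "\<delta> ^ (d - 1)"] by (intro mult_left_mono) auto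
  with g have g_le: "integral {\<delta>..1} g \<le> 2 * B"
    by (simp add: integral_unique B_def mult.commute)
  have F': "(F has_vector_derivative \<Phi> t * \<psi> t + e t) (at t within {\<delta>..1})" if "t \<in> {\<delta>..1}" for t
    using has_vector_derivative_exp_i_power_antiderivative[OF r_bound(1)[OF that] \<mu> d \<psi>'[OF that]]
    unfolding F_def e_def \<Phi>_def K_def by (rule has_vector_derivative_at_within)
  have F_le: "norm (F t) \<le> B" if t: "t \<in> {\<delta>..1}" for t
  proof -
    have "norm (F t) = norm (\<psi> t) * norm K * (1 / t ^ (d - 1))"
      unfolding F_def \<Phi>_def norm_mult[of "exp _"] norm_exp_i_times mult_1_left
      using r_bound[OF t] by (simp add: norm_mult norm_divide norm_power)
    also have "\<dots> \<le> A * (1 / \<bar>\<mu>\<bar>) * (1 / \<delta> ^ (d - 1))"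
      using r_bound[OF t] bound[OF t] K A by (intro mult_mono) auto
    finally show ?thesis
      by (simp add: B_def)
  qed
  have "norm (integral {\<delta>..1} (\<lambda>t. \<Phi> t * \<psi> t)) \<le> norm (F \<delta>) + norm (F 1) + integral {\<delta>..1} g"
    using \<delta>(2) F' e_int has_integral_integrable[OF g] e_le by (rule norm_integral_le_by_antiderivative)
  also have "\<dots> \<le> 4 * B"
    using F_le[of \<delta>] F_le[of 1] g_le \<delta> by simp
  finally show ?thesis
    by (simp add: B_def \<Phi>_def)
qed

lemma norm_integral_exp_i_power_left_tail:
  fixes \<psi> \<psi>' :: "real \<Rightarrow> complex"
  assumes d: "d \<ge> 1" and \<mu>: "\<mu> \<noteq> 0" and \<delta>: "0 < \<delta>" "\<delta> \<le> 1"
    and \<psi>': "\<And>t. t \<in> {-1..-\<delta>} \<Longrightarrow> (\<psi> has_vector_derivative \<psi>' t) (at t)"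
    and cont: "continuous_on {-1..-\<delta>} \<psi>'"
    and bound: "\<And>t. t \<in> {-1..-\<delta>} \<Longrightarrow> norm (\<psi> t) \<le> A \<and> norm (\<psi>' t) \<le> A"
  shows "norm (integral {-1..-\<delta>} (\<lambda>t. exp (\<i> * complex_of_real (\<mu> * t ^ d)) * \<psi> t))
           \<le> 4 * (A / (\<bar>\<mu>\<bar> * \<delta> ^ (d - 1)))"
proof -
  define \<mu>' where "\<mu>' = (- 1) ^ d * \<mu>"
  have "exp (\<i> * complex_of_real (\<mu> * (- t) ^ d)) * \<psi> (- t) = exp (\<i> * complex_of_real (\<mu>' * t ^ d)) * \<psi> (- t)" for t
    by (simp add: \<mu>'_def power_minus[of t d] ac_simps)
  then have reflected: "(\<lambda>t. exp (\<i> * complex_of_real (\<mu> * (- t) ^ d)) * \<psi> (- t))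
                          = (\<lambda>t. exp (\<i> * complex_of_real (\<mu>' * t ^ d)) * \<psi> (- t))"
    by (rule ext)
  have "integral {-1..-\<delta>} (\<lambda>t. exp (\<i> * complex_of_real (\<mu> * t ^ d)) * \<psi> t)
          = integral {\<delta>..1} (\<lambda>t. exp (\<i> * complex_of_real (\<mu>' * t ^ d)) * \<psi> (- t))"
    using Henstock_Kurzweil_Integration.integral_reflect_real
            [of 1 \<delta> "\<lambda>t. exp (\<i> * complex_of_real (\<mu> * (- t) ^ d)) * \<psi> (- t)"]
    unfolding reflected by (simp only: minus_minus)
  also have "norm \<dots> \<le> 4 * (A / (\<bar>\<mu>'\<bar> * \<delta> ^ (d - 1)))"
  proof (rule norm_integral_exp_i_power_tail[OF d _ \<delta>])
    show "\<mu>' \<noteq> 0"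
      using \<mu> by (simp add: \<mu>'_def)
    show "((\<lambda>t. \<psi> (- t)) has_vector_derivative - \<psi>' (- t)) (at t)" if "t \<in> {\<delta>..1}" for t
      using vector_diff_chain_at[OF has_vector_derivative_minus[OF has_vector_derivative_id] \<psi>'[of "- t"]] that
      by (auto simp: o_def)
    show "continuous_on {\<delta>..1} (\<lambda>t. - \<psi>' (- t))"
      by (intro continuous_intros continuous_on_compose2[OF cont]) auto
    show "norm (\<psi> (- t)) \<le> A \<and> norm (- \<psi>' (- t)) \<le> A" if "t \<in> {\<delta>..1}" for t
      using bound[of "- t"] that by auto
  qed
  finally show ?thesis
    by (simp add: \<mu>'_def abs_mult)
qed

lemma divide_mult_powr_root_power:
  assumes "m > 0" and "d \<ge> 1"
  shows "A / (m * (m powr (- 1 / real d)) ^ (d - 1)) = A * m powr (- 1 / real d)"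
proof -
  define \<delta> where "\<delta> = m powr (- 1 / real d)"
  have "\<delta> ^ d = \<delta> powr real d"
    using assms by (simp add: \<delta>_def powr_realpow)
  also have "\<dots> = 1 / m"
    unfolding \<delta>_def powr_powr using assms by (simp add: powr_minus_divide)
  finally have "\<delta> ^ (d - 1) * \<delta> = 1 / m"
    using assms(2) by (cases d) (auto simp: mult.commute)
  then have "m * \<delta> ^ (d - 1) = 1 / \<delta>"
    using assms by (simp add: \<delta>_def field_simps)
  then show ?thesis
    by (simp add: \<delta>_def)
qed

lemma norm_integral_exp_i_power_decay:
  fixes \<psi> \<psi>' :: "real \<Rightarrow> complex"
  assumes d: "d \<ge> 1" and \<mu>: "\<bar>\<mu>\<bar> \<ge> 1"
    and \<psi>': "\<And>t. t \<in> {-1..1} \<Longrightarrow> (\<psi> has_vector_derivative \<psi>' t) (at t)"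
    and cont: "continuous_on {-1..1} \<psi>'"
    and bound: "\<And>t. t \<in> {-1..1} \<Longrightarrow> norm (\<psi> t) \<le> A \<and> norm (\<psi>' t) \<le> A"
  shows "norm (integral {-1..1} (\<lambda>t. exp (\<i> * complex_of_real (\<mu> * t ^ d)) * \<psi> t))
           \<le> 10 * A * \<bar>\<mu>\<bar> powr (- 1 / real d)"
proof -
  define f where "f t = exp (\<i> * complex_of_real (\<mu> * t ^ d)) * \<psi> t" for t
  \<comment> \<open>Outside \<open>[-\<delta>, \<delta>]\<close> the phase is not stationary; inside, the trivial bound costs \<open>2 A \<delta>\<close>.\<close>
  define \<delta> where "\<delta> = \<bar>\<mu>\<bar> powr (- 1 / real d)"
  have "1 \<le> \<bar>\<mu>\<bar> powr (1 / real d)"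
    using \<mu> by (intro ge_one_powr_ge_zero) auto
  then have \<delta>: "0 < \<delta>" "\<delta> \<le> 1"
    using \<mu> by (auto simp: \<delta>_def powr_minus inverse_le_1_iff)
  have tail: "A / (\<bar>\<mu>\<bar> * \<delta> ^ (d - 1)) = A * \<delta>"
    unfolding \<delta>_def using \<mu> d by (intro divide_mult_powr_root_power) auto
  have "continuous_on {-1..1} \<psi>"
    using \<psi>' by (metis continuous_on_vector_derivative has_vector_derivative_at_within)
  then have f_cont: "continuous_on {-1..1} f"
    unfolding f_def by (intro continuous_intros)
  have f_int: "f integrable_on {a..b}" if "-1 \<le> a" "b \<le> 1" for a b
    using that by (intro integrable_continuous_interval continuous_on_subset[OF f_cont]) auto
  have "integral {-1..1} f = integral {-1..-\<delta>} f + integral {-\<delta>..\<delta>} f + integral {\<delta>..1} f"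
    using Henstock_Kurzweil_Integration.integral_combine[where a = "-1" and c = "-\<delta>" and b = 1 and f = f]
      Henstock_Kurzweil_Integration.integral_combine[where a = "-\<delta>" and c = \<delta> and b = 1 and f = f]
      f_int \<delta> by (simp add: add.assoc)
  then have "norm (integral {-1..1} f)
               \<le> norm (integral {-1..-\<delta>} f) + norm (integral {-\<delta>..\<delta>} f) + norm (integral {\<delta>..1} f)"
    by (metis norm_triangle_le norm_triangle_ineq add_mono order_refl)
  also have "\<dots> \<le> 4 * (A * \<delta>) + A * (\<delta> - - \<delta>) + 4 * (A * \<delta>)"
  proof (intro add_mono)
    show "norm (integral {-1..-\<delta>} f) \<le> 4 * (A * \<delta>)"
      unfolding f_def tail[symmetric] using \<mu> \<delta>
      by (intro norm_integral_exp_i_power_left_tail[OF d, where \<psi>' = \<psi>'])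
         (use bound in \<open>auto intro: \<psi>' continuous_on_subset[OF cont]\<close>)
    show "norm (integral {-\<delta>..\<delta>} f) \<le> A * (\<delta> - - \<delta>)"
      using \<delta> bound by (intro integral_bound continuous_on_subset[OF f_cont]) (auto simp: f_def norm_mult)
    show "norm (integral {\<delta>..1} f) \<le> 4 * (A * \<delta>)"
      unfolding f_def tail[symmetric] using \<mu> \<delta>
      by (intro norm_integral_exp_i_power_tail[OF d, where \<psi>' = \<psi>'])
         (use bound in \<open>auto intro: \<psi>' continuous_on_subset[OF cont]\<close>)
  qed
  finally show ?thesis
    unfolding f_def[abs_def] \<delta>_def by simp
qed

lemma norm_integral_exp_i_power:
  fixes \<psi> \<psi>' :: "real \<Rightarrow> complex"
  assumes d: "d \<ge> 1" and \<mu>: "\<mu> \<noteq> 0" and \<theta>: "0 \<le> \<theta>" "\<theta> \<le> 1"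
    and \<psi>': "\<And>t. t \<in> {-1..1} \<Longrightarrow> (\<psi> has_vector_derivative \<psi>' t) (at t)"
    and cont: "continuous_on {-1..1} \<psi>'"
    and bound: "\<And>t. t \<in> {-1..1} \<Longrightarrow> norm (\<psi> t) \<le> A \<and> norm (\<psi>' t) \<le> A"
  shows "norm (integral {-1..1} (\<lambda>t. exp (\<i> * complex_of_real (\<mu> * t ^ d)) * \<psi> t))
           \<le> 10 * A * \<bar>\<mu>\<bar> powr (- \<theta> / real d)"
proof (cases "\<bar>\<mu>\<bar> < 1")
  case True
  have A: "0 \<le> A"
    using bound[of 0] by (smt (verit) atLeastAtMost_iff norm_ge_zero)
  have "\<bar>\<mu>\<bar> powr (\<theta> / real d) \<le> 1"
    using True \<theta> by (intro powr_le1) auto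
  then have "1 \<le> \<bar>\<mu>\<bar> powr (- \<theta> / real d)"
    using \<mu> by (simp add: powr_minus_divide[of _ "\<theta> / real d", simplified] divide_simps)
  have "continuous_on {-1..1} \<psi>"
    using \<psi>' by (metis continuous_on_vector_derivative has_vector_derivative_at_within)
  then have "continuous_on {-1..1} (\<lambda>t. exp (\<i> * complex_of_real (\<mu> * t ^ d)) * \<psi> t)"
    by (intro continuous_intros)
  then have "norm (integral {-1..1} (\<lambda>t. exp (\<i> * complex_of_real (\<mu> * t ^ d)) * \<psi> t)) \<le> A * (1 - - 1)"
    using bound by (intro integral_bound) (auto simp: norm_mult)
  also have "\<dots> \<le> 10 * A * 1"
    using A by simp
  also have "\<dots> \<le> 10 * A * \<bar>\<mu>\<bar> powr (- \<theta> / real d)"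
    using \<open>1 \<le> \<bar>\<mu>\<bar> powr (- \<theta> / real d)\<close> A by (intro mult_left_mono) auto
  finally show ?thesis .
next
  case False
  then have "norm (integral {-1..1} (\<lambda>t. exp (\<i> * complex_of_real (\<mu> * t ^ d)) * \<psi> t))
               \<le> 10 * A * \<bar>\<mu>\<bar> powr (- 1 / real d)"
    by (intro norm_integral_exp_i_power_decay[OF d _ \<psi>' cont bound]) auto
  also have "\<dots> \<le> 10 * A * \<bar>\<mu>\<bar> powr (- \<theta> / real d)"
    using False \<theta> d bound[of 0]
    by (intro mult_left_mono powr_mono) (auto simp: divide_simps intro: order.trans[OF norm_ge_zero])
  finally show ?thesis .
qed

lemma smooth_differentiable:
  assumes "smooth \<phi>"
  shows "\<phi> differentiable (at x)"
  using assms unfolding smooth_def by (metis iter_dderiv.simps(1))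

lemma smooth_continuous_on:
  assumes "smooth \<phi>"
  shows "continuous_on S \<phi>"
  using smooth_differentiable[OF assms]
  by (simp add: differentiable_imp_continuous_within continuous_at_imp_continuous_on)

lemma smooth_directional_derivative_continuous_on:
  assumes "smooth \<phi>"
  shows "continuous_on S (iter_dderiv [u] \<phi>)"
  using assms unfolding smooth_def
  by (metis differentiable_imp_continuous_within continuous_at_imp_continuous_on)

lemma smooth_has_vector_derivative_line:
  fixes \<phi> :: "'a::real_normed_vector \<Rightarrow> 'b::real_normed_vector"
  assumes "smooth \<phi>"
  shows "((\<lambda>t. \<phi> (v + t *\<^sub>R u)) has_vector_derivative iter_dderiv [u] \<phi> (v + t *\<^sub>R u)) (at t)"
proof -
  let ?D = "frechet_derivative \<phi> (at (v + t *\<^sub>R u))"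
  have "(\<phi> has_derivative ?D) (at (v + t *\<^sub>R u))"
    using smooth_differentiable[OF assms] by (rule frechet_derivative_works[THEN iffD1])
  moreover have "((\<lambda>t. v + t *\<^sub>R u) has_derivative (\<lambda>h. h *\<^sub>R u)) (at t)"
    by (auto intro!: derivative_eq_intros)
  ultimately have "((\<lambda>t. \<phi> (v + t *\<^sub>R u)) has_derivative (\<lambda>h. ?D (h *\<^sub>R u))) (at t)"
    using diff_chain_at by (force simp: o_def)
  moreover have "?D (h *\<^sub>R u) = h *\<^sub>R ?D u" for h
    using \<open>(\<phi> has_derivative ?D) _\<close> by (simp add: has_derivative_linear linear_scale)
  ultimately show ?thesis
    by (simp add: has_vector_derivative_def)
qed

lemma smooth_bounded_on_compact:
  fixes \<phi> :: "'a::real_normed_vector \<Rightarrow> 'b::real_normed_vector"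
  assumes "smooth \<phi>" and "compact S"
  obtains A where "A > 0" and "\<And>y. y \<in> S \<Longrightarrow> norm (\<phi> y) \<le> A \<and> norm (iter_dderiv [u] \<phi> y) \<le> A"
proof -
  have "bounded (\<phi> ` S)"
    using assms by (intro compact_imp_bounded compact_continuous_image smooth_continuous_on)
  moreover have "bounded (iter_dderiv [u] \<phi> ` S)"
    using assms by (intro compact_imp_bounded compact_continuous_image smooth_directional_derivative_continuous_on)
  ultimately obtain A\<^sub>1 A\<^sub>2 where "A\<^sub>1 > 0" "\<And>y. y \<in> S \<Longrightarrow> norm (\<phi> y) \<le> A\<^sub>1"
    and "A\<^sub>2 > 0" "\<And>y. y \<in> S \<Longrightarrow> norm (iter_dderiv [u] \<phi> y) \<le> A\<^sub>2"
    unfolding bounded_pos by (auto simp: image_iff)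
  then show ?thesis
    by (intro that[of "max A\<^sub>1 A\<^sub>2"]) (auto simp: le_max_iff_disj)
qed

lemma integrable_lborel_if_vanishing_outside_cbox:
  fixes f :: "'a::euclidean_space \<Rightarrow> 'b::euclidean_space"
  assumes "continuous_on (cbox a b) f" and "\<And>x. x \<notin> cbox a b \<Longrightarrow> f x = 0"
  shows "integrable lborel f"
proof -
  have "f = (\<lambda>x. indicator (cbox a b) x *\<^sub>R f x)"
    using assms(2) by (auto simp: indicator_def)
  then show ?thesis
    using borel_integrable_compact[OF compact_cbox assms(1)] by simp
qed

lemma integral_lborel_eq_integral_cbox:
  fixes f :: "'a::euclidean_space \<Rightarrow> 'b::euclidean_space"
  assumes "continuous_on (cbox a b) f" and "\<And>x. x \<notin> cbox a b \<Longrightarrow> f x = 0"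
  shows "integral\<^sup>L lborel f = integral (cbox a b) f"
proof -
  have "integrable lborel f"
    using assms by (rule integrable_lborel_if_vanishing_outside_cbox)
  then have "integral\<^sup>L lborel f = integral UNIV f"
    by (rule integral_lborel[symmetric])
  also have "\<dots> = integral UNIV (\<lambda>x. if x \<in> cbox a b then f x else 0)"
    using assms(2) by metis
  also have "\<dots> = integral (cbox a b) f"
    by (rule integral_restrict_UNIV)
  finally show ?thesis .
qed

lemma measurable_vec_lambda_PiM:
  "(\<lambda>x. \<chi> j. x j) \<in> borel_measurable (Pi\<^sub>M (UNIV :: 'n::finite set) (\<lambda>_. lborel :: real measure))"
proof -
  have "(\<lambda>x. (\<chi> j. x j) \<bullet> axis i 1) \<in> borel_measurable (Pi\<^sub>M UNIV (\<lambda>_. lborel))" for i :: 'n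
    by (simp add: inner_axis measurable_component_singleton)
  then show ?thesis
    by (auto simp: borel_measurable_euclidean_space[where f = "\<lambda>x. \<chi> j. x j"] Basis_vec_def)
qed

lemma lborel_vec_eq_distr_PiM:
  "(lborel :: (real^'n::finite) measure) = distr (Pi\<^sub>M UNIV (\<lambda>_. lborel)) borel (\<lambda>x. \<chi> j. x j)"
proof (rule lborel_eqI)
  interpret P: product_sigma_finite "\<lambda>_::'n. lborel :: real measure"
    by standard
  fix l u :: "real^'n"
  assume le: "\<And>b. b \<in> Basis \<Longrightarrow> l \<bullet> b \<le> u \<bullet> b"
  have box: "(\<lambda>x. \<chi> j. x j) -` box l u \<inter> space (Pi\<^sub>M UNIV (\<lambda>_. lborel)) = Pi\<^sub>E UNIV (\<lambda>j. {l $ j <..< u $ j})"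
    by (auto simp: mem_box_cart space_PiM PiE_def extensional_def Pi_iff)
  have Basis: "(Basis :: (real^'n) set) = range (\<lambda>j. axis j 1)"
    unfolding Basis_vec_def by auto
  have vol: "(\<Prod>b\<in>Basis. (u - l) \<bullet> b) = (\<Prod>j\<in>UNIV. u $ j - l $ j)"
    unfolding Basis by (subst prod.reindex) (auto simp: inj_on_def axis_eq_axis inner_axis)
  have "l $ j \<le> u $ j" for j
    using le[of "axis j 1"] by (simp add: inner_axis)
  then have "emeasure (Pi\<^sub>M UNIV (\<lambda>_. lborel)) (Pi\<^sub>E UNIV (\<lambda>j. {l $ j <..< u $ j})) = (\<Prod>b\<in>Basis. (u - l) \<bullet> b)"
    unfolding vol by (simp add: P.emeasure_PiM prod_ennreal)
  then show "emeasure (distr (Pi\<^sub>M UNIV (\<lambda>_. lborel)) borel (\<lambda>x. \<chi> j. x j)) (box l u) = (\<Prod>b\<in>Basis. (u - l) \<bullet> b)"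
    using box by (subst emeasure_distr[OF measurable_vec_lambda_PiM]) auto
qed simp

lemma integral_lborel_vec_eq_iterated:
  fixes G :: "real^'n::finite \<Rightarrow> 'b::{banach, second_countable_topology}"
  assumes "integrable lborel G"
  shows "integral\<^sup>L lborel G
           = (\<integral>x. (\<integral>t. G (\<chi> j. (x(k := t)) j) \<partial>lborel) \<partial>Pi\<^sub>M (UNIV - {k}) (\<lambda>_. lborel))"
proof -
  interpret P: product_sigma_finite "\<lambda>_::'n. lborel :: real measure"
    by standard
  have G: "G \<in> borel_measurable borel"
    using assms by simp
  have "integrable (Pi\<^sub>M (insert k (UNIV - {k})) (\<lambda>_. lborel)) (\<lambda>x. G (\<chi> j. x j))"
    using assms unfolding lborel_vec_eq_distr_PiM
    by (simp add: integrable_distr_eq[OF measurable_vec_lambda_PiM G] insert_absorb)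
  from P.product_integral_insert[OF _ _ this] have
    "integral\<^sup>L (Pi\<^sub>M UNIV (\<lambda>_. lborel)) (\<lambda>x. G (\<chi> j. x j))
       = (\<integral>x. (\<integral>t. G (\<chi> j. (x(k := t)) j) \<partial>lborel) \<partial>Pi\<^sub>M (UNIV - {k}) (\<lambda>_. lborel))"
    by (simp add: insert_absorb)
  moreover have "integral\<^sup>L lborel G = integral\<^sup>L (Pi\<^sub>M UNIV (\<lambda>_. lborel)) (\<lambda>x. G (\<chi> j. x j))"
    by (subst lborel_vec_eq_distr_PiM) (rule integral_distr[OF measurable_vec_lambda_PiM G])
  ultimately show ?thesis
    by simp
qed

lemma norm_integral_lborel_vec_le_prod:
  fixes G :: "real^'n::finite \<Rightarrow> 'b::{banach, second_countable_topology}"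
  assumes "integrable lborel G"
    and w: "\<And>j. w j \<in> borel_measurable borel"
    and slice: "\<And>x. ennreal (norm (\<integral>t. G (\<chi> j. (x(k := t)) j) \<partial>lborel))
                       \<le> ennreal K * (\<Prod>j\<in>UNIV - {k}. w j (x j))"
  shows "ennreal (norm (integral\<^sup>L lborel G)) \<le> ennreal K * (\<Prod>j\<in>UNIV - {k}. \<integral>\<^sup>+ t. w j t \<partial>lborel)"
proof -
  interpret P: product_sigma_finite "\<lambda>_::'n. lborel :: real measure"
    by standard
  define S where "S x = (\<integral>t. G (\<chi> j. (x(k := t)) j) \<partial>lborel)" for x
  have "integral\<^sup>L lborel G = integral\<^sup>L (Pi\<^sub>M (UNIV - {k}) (\<lambda>_. lborel)) S"
    unfolding S_def[abs_def] using assms(1) by (rule integral_lborel_vec_eq_iterated)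
  then have "ennreal (norm (integral\<^sup>L lborel G))
          \<le> (\<integral>\<^sup>+ x. norm (S x) \<partial>Pi\<^sub>M (UNIV - {k}) (\<lambda>_. lborel))"
    by (cases "integrable (Pi\<^sub>M (UNIV - {k}) (\<lambda>_. lborel)) S")
       (simp_all add: integral_norm_bound_ennreal not_integrable_integral_eq)
  also have "\<dots> \<le> (\<integral>\<^sup>+ x. ennreal K * (\<Prod>j\<in>UNIV - {k}. w j (x j)) \<partial>Pi\<^sub>M (UNIV - {k}) (\<lambda>_. lborel))"
    unfolding S_def by (intro nn_integral_mono slice)
  also have "\<dots> = ennreal K * (\<Prod>j\<in>UNIV - {k}. \<integral>\<^sup>+ t. w j t \<partial>lborel)"
    using w by (simp add: nn_integral_cmult P.product_nn_integral_prod)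
  finally show ?thesis .
qed

text \<open>The value \<open>\<infinity>\<close> at \<open>t = 0\<close>, where the phase gives no decay, is deliberate:
  \<open>0 powr - \<beta>\<close> would be \<open>0\<close>.\<close>
definition abs_powr_weight :: "real \<Rightarrow> real \<Rightarrow> ennreal" where
  "abs_powr_weight \<beta> t = (if t = 0 then \<infinity> else if \<bar>t\<bar> \<le> 1 then ennreal (\<bar>t\<bar> powr - \<beta>) else 0)"

lemma abs_powr_weight_measurable [measurable]: "abs_powr_weight \<beta> \<in> borel_measurable borel"
  unfolding abs_powr_weight_def by measurable

lemma nn_integral_abs_powr_weight:
  assumes "0 \<le> \<beta>" "\<beta> < 1"
  shows "(\<integral>\<^sup>+ t. abs_powr_weight \<beta> t \<partial>lborel) = ennreal (2 / (1 - \<beta>))"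
proof -
  have "((\<lambda>t. t powr - \<beta>) has_integral 1 / (1 - \<beta>)) {0..1}"
    using has_integral_powr_from_0[of "- \<beta>" 1] assms by simp
  then have right: "((\<lambda>t. \<bar>t\<bar> powr - \<beta>) has_integral 1 / (1 - \<beta>)) {0..1}"
    by (rule has_integral_eq[rotated]) simp
  then have "((\<lambda>t. \<bar>t\<bar> powr - \<beta>) has_integral 1 / (1 - \<beta>)) {-1..0}"
    using has_integral_reflect_real[of "\<lambda>t. \<bar>t\<bar> powr - \<beta>" _ 1 0] by simp
  from has_integral_combine[OF _ _ this right]
  have "((\<lambda>t. \<bar>t\<bar> powr - \<beta>) has_integral 2 / (1 - \<beta>)) {-1..1}"
    by simp
  then have "(\<integral>\<^sup>+ t. ennreal (indicator {-1..1} t * \<bar>t\<bar> powr - \<beta>) \<partial>lborel) = 2 / (1 - \<beta>)"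
    by (rule nn_integral_has_integral_lebesgue[rotated]) simp
  moreover have "AE t in lborel. abs_powr_weight \<beta> t = ennreal (indicator {-1..1} t * \<bar>t\<bar> powr - \<beta>)"
    using AE_lborel_singleton[of 0] by eventually_elim (auto simp: abs_powr_weight_def indicator_def)
  ultimately show ?thesis
    by (simp add: nn_integral_cong_AE)
qed

lemma mem_cbox_minus_one_one_cart: "y \<in> cbox (- 1) (1 :: real^'n) \<longleftrightarrow> (\<forall>j. \<bar>y $ j\<bar> \<le> 1)"
  by (auto simp: mem_box_cart abs_le_iff)

lemma zero_outside_closure_support:
  assumes "closure {x. f x \<noteq> 0} \<subseteq> S" and "x \<notin> S"
  shows "f x = 0"
proof (rule ccontr)
  assume "f x \<noteq> 0"
  then have "x \<in> closure {x. f x \<noteq> 0}"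
    by (meson closure_subset mem_Collect_eq subsetD)
  with assms show False
    by (meson subsetD)
qed

definition osc_integrand :: "('n::finite \<Rightarrow> nat) \<Rightarrow> (real^'n \<Rightarrow> complex) \<Rightarrow> real \<Rightarrow> real^'n \<Rightarrow> complex" where
  "osc_integrand \<alpha> \<phi> lam y = exp (\<i> * complex_of_real (lam * (\<Prod>j\<in>UNIV. (y $ j) ^ \<alpha> j))) * \<phi> y"

lemma osc_integral_eq_integral_osc_integrand: "osc_integral \<alpha> \<phi> lam = integral UNIV (osc_integrand \<alpha> \<phi> lam)"
  by (simp add: osc_integral_def osc_integrand_def[abs_def])

lemma vec_lambda_fun_upd_eq_line:
  "(\<chi> i. (x(k := t)) i) = (\<chi> i. (x(k := 0)) i) + t *\<^sub>R axis k (1::real)"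
  by (simp add: vec_eq_iff axis_def)

lemma vec_lambda_fun_upd_in_cbox_iff:
  assumes "\<And>j. j \<noteq> k \<Longrightarrow> \<bar>x j\<bar> \<le> 1"
  shows "(\<chi> i. (x(k := t)) i) \<in> cbox (- 1) (1 :: real^'n::finite) \<longleftrightarrow> t \<in> {-1..1}"
  unfolding mem_cbox_minus_one_one_cart vec_lambda_beta
proof
  assume "\<forall>j. \<bar>(x(k := t)) j\<bar> \<le> 1"
  then have "\<bar>(x(k := t)) k\<bar> \<le> 1" ..
  then show "t \<in> {-1..1}"
    by (simp add: abs_le_iff)
qed (use assms in \<open>auto simp: abs_le_iff\<close>)

lemma prod_power_vec_lambda_fun_upd:
  fixes x :: "'n::finite \<Rightarrow> 'a::comm_monoid_mult"
  shows "(\<Prod>j\<in>UNIV. ((\<chi> i. (x(k := t)) i) $ j) ^ \<alpha> j) = t ^ \<alpha> k * (\<Prod>j\<in>UNIV - {k}. x j ^ \<alpha> j)"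
proof -
  have "(\<Prod>j\<in>UNIV - {k}. ((\<chi> i. (x(k := t)) i) $ j) ^ \<alpha> j) = (\<Prod>j\<in>UNIV - {k}. x j ^ \<alpha> j)"
    by (rule prod.cong) auto
  then show ?thesis
    by (simp add: prod.remove[of UNIV k])
qed

lemma abs_mult_prod_power_powr:
  fixes z :: "'a \<Rightarrow> real"
  assumes "finite S" and "\<And>j. j \<in> S \<Longrightarrow> z j \<noteq> 0" and "lam > 0"
  shows "\<bar>lam * (\<Prod>j\<in>S. z j ^ a j)\<bar> powr s = lam powr s * (\<Prod>j\<in>S. \<bar>z j\<bar> powr (real (a j) * s))"
proof -
  have "\<bar>lam * (\<Prod>j\<in>S. z j ^ a j)\<bar> powr s = lam powr s * (\<Prod>j\<in>S. (\<bar>z j\<bar> ^ a j) powr s)"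
    using assms by (simp add: abs_mult abs_prod power_abs powr_mult prod_nonneg prod_powr_distrib)
  also have "(\<Prod>j\<in>S. (\<bar>z j\<bar> ^ a j) powr s) = (\<Prod>j\<in>S. \<bar>z j\<bar> powr (real (a j) * s))"
    using assms(2) by (intro prod.cong) (simp_all add: powr_realpow[symmetric] powr_powr)
  finally show ?thesis .
qed

lemma norm_slice_integral_le:
  fixes \<phi> :: "real^'n::finite \<Rightarrow> complex" and \<alpha> :: "'n \<Rightarrow> nat" and x :: "'n \<Rightarrow> real"
  assumes sm: "smooth \<phi>" and d: "d \<ge> 1" and \<alpha>k: "\<alpha> k = d" and lam: "lam > 0"
    and \<theta>: "0 \<le> \<theta>" "\<theta> \<le> 1"
    and supp: "\<And>y. y \<notin> cbox (- 1) 1 \<Longrightarrow> \<phi> y = 0"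
    and bound: "\<And>y. y \<in> cbox (- 1) 1 \<Longrightarrow> norm (\<phi> y) \<le> A \<and> norm (iter_dderiv [axis k 1] \<phi> y) \<le> A"
    and x: "\<And>j. j \<noteq> k \<Longrightarrow> x j \<noteq> 0 \<and> \<bar>x j\<bar> \<le> 1"
  shows "norm (\<integral>t. osc_integrand \<alpha> \<phi> lam (\<chi> i. (x(k := t)) i) \<partial>lborel)
           \<le> 10 * A * lam powr (- \<theta> / real d) * (\<Prod>j\<in>UNIV - {k}. \<bar>x j\<bar> powr (real (\<alpha> j) * (- \<theta> / real d)))"
proof -
  define y where "y t = (\<chi> i. (x(k := t)) i)" for t
  define c where "c = (\<Prod>j\<in>UNIV - {k}. x j ^ \<alpha> j)"
  define f where "f t = exp (\<i> * complex_of_real ((lam * c) * t ^ d)) * \<phi> (y t)" for t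
  define y\<^sub>0 where "y\<^sub>0 = y 0"
  have line: "y t = y\<^sub>0 + t *\<^sub>R axis k 1" for t
    unfolding y\<^sub>0_def y_def by (rule vec_lambda_fun_upd_eq_line)
  have in_cube: "y t \<in> cbox (- 1) 1 \<longleftrightarrow> t \<in> {-1..1}" for t
    unfolding y_def using x by (intro vec_lambda_fun_upd_in_cbox_iff) auto
  have phase: "(\<Prod>j\<in>UNIV. (y t $ j) ^ \<alpha> j) = t ^ d * c" for t
    unfolding y_def c_def prod_power_vec_lambda_fun_upd \<alpha>k ..
  have "osc_integrand \<alpha> \<phi> lam (y t) = f t" for t
    by (simp only: osc_integrand_def f_def phase) (simp add: mult_ac)
  then have "(\<lambda>t. osc_integrand \<alpha> \<phi> lam (\<chi> i. (x(k := t)) i)) = f"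
    unfolding y_def[symmetric] by (rule ext)
  moreover have "continuous_on UNIV (\<lambda>t. \<phi> (y t))"
    unfolding line by (intro continuous_on_compose2[OF smooth_continuous_on[OF sm]] continuous_intros) auto
  then have "continuous_on (cbox (- 1) 1) f"
    unfolding f_def by (intro continuous_intros) (auto intro: continuous_on_subset)
  then have "integral\<^sup>L lborel f = integral (cbox (- 1) 1) f"
    using in_cube supp by (intro integral_lborel_eq_integral_cbox) (auto simp: f_def)
  moreover have "norm (integral {-1..1} f) \<le> 10 * A * \<bar>lam * c\<bar> powr (- \<theta> / real d)"
    unfolding f_def
  proof (rule norm_integral_exp_i_power[where \<psi>' = "\<lambda>t. iter_dderiv [axis k 1] \<phi> (y t)"])
    show "lam * c \<noteq> 0"
      using x lam by (simp add: c_def)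
    show "((\<lambda>t. \<phi> (y t)) has_vector_derivative iter_dderiv [axis k 1] \<phi> (y t)) (at t)" for t
      unfolding line by (rule smooth_has_vector_derivative_line[OF sm])
    show "continuous_on {-1..1} (\<lambda>t. iter_dderiv [axis k 1] \<phi> (y t))"
      unfolding line
      by (intro continuous_on_compose2[OF smooth_directional_derivative_continuous_on[OF sm]] continuous_intros) auto
  qed (use d \<theta> in_cube bound in auto)
  moreover have "\<bar>lam * c\<bar> powr (- \<theta> / real d)
                   = lam powr (- \<theta> / real d) * (\<Prod>j\<in>UNIV - {k}. \<bar>x j\<bar> powr (real (\<alpha> j) * (- \<theta> / real d)))"
    unfolding c_def using x lam by (intro abs_mult_prod_power_powr) auto
  ultimately show ?thesis
    by (simp add: mult.assoc cbox_interval)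
qed

lemma ennreal_norm_slice_integral_le:
  fixes \<phi> :: "real^'n::finite \<Rightarrow> complex" and \<alpha> :: "'n \<Rightarrow> nat" and x :: "'n \<Rightarrow> real"
  assumes sm: "smooth \<phi>" and d: "d \<ge> 1" and \<alpha>k: "\<alpha> k = d" and lam: "lam > 0"
    and \<theta>: "0 \<le> \<theta>" "\<theta> \<le> 1" and A: "A > 0"
    and supp: "\<And>y. y \<notin> cbox (- 1) 1 \<Longrightarrow> \<phi> y = 0"
    and bound: "\<And>y. y \<in> cbox (- 1) 1 \<Longrightarrow> norm (\<phi> y) \<le> A \<and> norm (iter_dderiv [axis k 1] \<phi> y) \<le> A"
  shows "ennreal (norm (\<integral>t. osc_integrand \<alpha> \<phi> lam (\<chi> i. (x(k := t)) i) \<partial>lborel))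
           \<le> ennreal (10 * A * lam powr (- \<theta> / real d))
               * (\<Prod>j\<in>UNIV - {k}. abs_powr_weight (real (\<alpha> j) * \<theta> / real d) (x j))"
proof (cases "\<exists>j. j \<noteq> k \<and> \<bar>x j\<bar> > 1")
  case True
  then obtain j where "j \<noteq> k" "\<bar>x j\<bar> > 1"
    by blast
  then have "(\<chi> i. (x(k := t)) i) \<notin> cbox (- 1) 1" for t
    by (auto simp: mem_cbox_minus_one_one_cart intro!: exI[of _ j])
  then show ?thesis
    by (simp add: osc_integrand_def supp)
next
  case outside: False
  show ?thesis
  proof (cases "\<exists>j. j \<noteq> k \<and> x j = 0")
    case True
    have "abs_powr_weight (real (\<alpha> j) * \<theta> / real d) (x j) \<noteq> 0" if "j \<noteq> k" for j
      using outside that by (auto simp: abs_powr_weight_def)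
    with True have "(\<Prod>j\<in>UNIV - {k}. abs_powr_weight (real (\<alpha> j) * \<theta> / real d) (x j)) = \<infinity>"
      by (auto simp: ennreal_prod_eq_top abs_powr_weight_def)
    then show ?thesis
      using A lam by (simp add: ennreal_mult_top)
  next
    case False
    with outside have x: "x j \<noteq> 0 \<and> \<bar>x j\<bar> \<le> 1" if "j \<noteq> k" for j
      using that by auto
    have "ennreal (norm (\<integral>t. osc_integrand \<alpha> \<phi> lam (\<chi> i. (x(k := t)) i) \<partial>lborel))
            \<le> ennreal (10 * A * lam powr (- \<theta> / real d)
                 * (\<Prod>j\<in>UNIV - {k}. \<bar>x j\<bar> powr (real (\<alpha> j) * (- \<theta> / real d))))"
      using norm_slice_integral_le[where x = x and \<alpha> = \<alpha> and k = k, OF sm d \<alpha>k lam \<theta> supp bound x] by (rule ennreal_leI)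
    also have "\<dots> = ennreal (10 * A * lam powr (- \<theta> / real d))
                      * (\<Prod>j\<in>UNIV - {k}. abs_powr_weight (real (\<alpha> j) * \<theta> / real d) (x j))"
      using A x by (simp add: ennreal_mult prod_nonneg prod_ennreal[symmetric] abs_powr_weight_def)
    finally show ?thesis .
  qed
qed

lemma norm_osc_integral_le_prod:
  fixes \<phi> :: "real^'n::finite \<Rightarrow> complex" and \<alpha> :: "'n \<Rightarrow> nat"
  assumes sm: "smooth \<phi>" and d: "d \<ge> 1" and \<alpha>k: "\<alpha> k = d" and \<alpha>_le: "\<And>j. \<alpha> j \<le> d"
    and lam: "lam > 0" and \<theta>: "0 \<le> \<theta>" "\<theta> < 1" and A: "A > 0"
    and supp: "\<And>y. y \<notin> cbox (- 1) 1 \<Longrightarrow> \<phi> y = 0"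
    and bound: "\<And>y. y \<in> cbox (- 1) 1 \<Longrightarrow> norm (\<phi> y) \<le> A \<and> norm (iter_dderiv [axis k 1] \<phi> y) \<le> A"
  shows "norm (osc_integral \<alpha> \<phi> lam)
           \<le> 10 * A * lam powr (- \<theta> / real d) * (\<Prod>j\<in>UNIV - {k}. 2 / (1 - real (\<alpha> j) * \<theta> / real d))"
proof -
  define \<beta> where "\<beta> j = real (\<alpha> j) * \<theta> / real d" for j
  have \<beta>: "0 \<le> \<beta> j \<and> \<beta> j < 1" for j
  proof -
    have "real (\<alpha> j) * \<theta> \<le> real d * \<theta>"
      using \<alpha>_le[of j] \<theta> by (intro mult_right_mono) auto
    moreover have "0 < (1 - \<theta>) * real d"
      using d \<theta> by simp
    ultimately have "real (\<alpha> j) * \<theta> < real d"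
      by (simp add: algebra_simps)
    then show ?thesis
      using d \<theta> by (simp add: \<beta>_def field_simps)
  qed
  have "continuous_on UNIV (osc_integrand \<alpha> \<phi> lam)"
    unfolding osc_integrand_def[abs_def] by (intro continuous_intros smooth_continuous_on[OF sm])
  moreover have "osc_integrand \<alpha> \<phi> lam y = 0" if "y \<notin> cbox (- 1) 1" for y
    using supp[OF that] by (simp add: osc_integrand_def)
  ultimately have int: "integrable lborel (osc_integrand \<alpha> \<phi> lam)"
    by (intro integrable_lborel_if_vanishing_outside_cbox) (auto intro: continuous_on_subset)
  have "ennreal (norm (osc_integral \<alpha> \<phi> lam))
          \<le> ennreal (10 * A * lam powr (- \<theta> / real d)) * (\<Prod>j\<in>UNIV - {k}. \<integral>\<^sup>+ t. abs_powr_weight (\<beta> j) t \<partial>lborel)"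
    unfolding osc_integral_eq_integral_osc_integrand integral_lborel[OF int] \<beta>_def
    by (rule norm_integral_lborel_vec_le_prod[OF int abs_powr_weight_measurable])
       (rule ennreal_norm_slice_integral_le[where \<alpha> = \<alpha> and k = k, OF sm d \<alpha>k lam \<theta>(1) less_imp_le[OF \<theta>(2)] A supp bound])
  also have "\<dots> = ennreal (10 * A * lam powr (- \<theta> / real d)) * ennreal (\<Prod>j\<in>UNIV - {k}. 2 / (1 - \<beta> j))"
    using \<beta> by (simp add: nn_integral_abs_powr_weight prod_ennreal less_imp_le)
  also have "\<dots> = ennreal (10 * A * lam powr (- \<theta> / real d) * (\<Prod>j\<in>UNIV - {k}. 2 / (1 - \<beta> j)))"
    using \<beta> A by (simp add: ennreal_mult prod_nonneg less_imp_le)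
  finally have "ennreal (norm (osc_integral \<alpha> \<phi> lam))
      \<le> ennreal (10 * A * lam powr (- \<theta> / real d) * (\<Prod>j\<in>UNIV - {k}. 2 / (1 - \<beta> j)))" .
  moreover have "0 \<le> 10 * A * lam powr (- \<theta> / real d) * (\<Prod>j\<in>UNIV - {k}. 2 / (1 - \<beta> j))"
    using \<beta> A by (auto intro!: mult_nonneg_nonneg prod_nonneg divide_nonneg_pos)
  ultimately show ?thesis
    by (simp add: \<beta>_def)
qed

lemma powr_neg_exponent_shift_le:
  assumes "lam > exp 1" and "d \<ge> 1"
  shows "lam powr (- (1 - 1 / ln lam) / real d) \<le> exp 1 * lam powr (- 1 / real d)"
proof -
  have "ln lam > 1"
    using assms(1) by (metis ln_exp ln_less_cancel_iff exp_gt_zero less_trans)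
  then have "lam powr (- (1 - 1 / ln lam) / real d) = lam powr (- 1 / real d) * exp (1 / real d)"
    using assms by (simp add: powr_def exp_add[symmetric] field_simps)
  also have "\<dots> \<le> lam powr (- 1 / real d) * exp 1"
    using assms(2) by (intro mult_left_mono) auto
  finally show ?thesis
    by (simp add: mult.commute)
qed

lemma prod_interpolation_factors_le:
  fixes \<alpha> :: "'n::finite \<Rightarrow> nat"
  assumes lam: "lam > exp 1" and d: "d \<ge> 1" and \<alpha>k: "\<alpha> k = d" and \<alpha>_le: "\<And>j. \<alpha> j \<le> d"
  defines "\<theta> \<equiv> 1 - 1 / ln lam"
  shows "(\<Prod>j\<in>UNIV - {k}. 2 / (1 - real (\<alpha> j) * \<theta> / real d))
           \<le> (2 * real d) ^ (CARD('n) - 1) * ln lam ^ (card {j. \<alpha> j = d} - 1)"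
proof -
  have L: "ln lam > 1"
    using lam by (metis ln_exp ln_less_cancel_iff exp_gt_zero less_trans)
  then have \<theta>: "0 \<le> \<theta>" "\<theta> < 1"
    by (auto simp: \<theta>_def)
  have factor: "0 \<le> 2 / (1 - real (\<alpha> j) * \<theta> / real d)
                \<and> 2 / (1 - real (\<alpha> j) * \<theta> / real d) \<le> 2 * real d * (if \<alpha> j = d then ln lam else 1)" for j
  proof (cases "\<alpha> j = d")
    case True
    then show ?thesis
      using d L by (simp add: \<theta>_def)
  next
    case False
    then have "real (\<alpha> j) \<le> real d - 1"
      using \<alpha>_le[of j] by linarith
    then have le: "real (\<alpha> j) * \<theta> \<le> real d - 1"
      using \<theta> by (smt (verit) mult_left_le of_nat_0_le_iff)
    then have "1 / real d \<le> 1 - real (\<alpha> j) * \<theta> / real d"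
      using d by (simp add: field_simps)
    moreover have "0 < 1 / real d"
      using d by simp
    ultimately have "2 / (1 - real (\<alpha> j) * \<theta> / real d) \<le> 2 / (1 / real d)"
      by (intro frac_le) auto
    with \<open>0 < 1 / real d\<close> \<open>1 / real d \<le> _\<close> show ?thesis
      using False le by simp
  qed
  have "(\<Prod>j\<in>UNIV - {k}. 2 / (1 - real (\<alpha> j) * \<theta> / real d))
          \<le> (\<Prod>j\<in>UNIV - {k}. 2 * real d * (if \<alpha> j = d then ln lam else 1))"
    using factor by (intro prod_mono) auto
  also have "\<dots> = (2 * real d) ^ card (UNIV - {k}) * (\<Prod>j\<in>{j \<in> UNIV - {k}. \<alpha> j = d}. ln lam)"
    by (simp add: prod.distrib prod.inter_filter[symmetric])
  also have "{j \<in> UNIV - {k}. \<alpha> j = d} = {j. \<alpha> j = d} - {k}"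
    by auto
  finally show ?thesis
    using \<alpha>k by (simp add: card_Diff_singleton)
qed

lemma norm_osc_integral_le_log:
  fixes \<phi> :: "real^'n::finite \<Rightarrow> complex" and \<alpha> :: "'n \<Rightarrow> nat"
  assumes sm: "smooth \<phi>" and d: "d \<ge> 1" and \<alpha>k: "\<alpha> k = d" and \<alpha>_le: "\<And>j. \<alpha> j \<le> d"
    and lam: "lam > exp 1" and A: "A > 0"
    and supp: "\<And>y. y \<notin> cbox (- 1) 1 \<Longrightarrow> \<phi> y = 0"
    and bound: "\<And>y. y \<in> cbox (- 1) 1 \<Longrightarrow> norm (\<phi> y) \<le> A \<and> norm (iter_dderiv [axis k 1] \<phi> y) \<le> A"
  shows "norm (osc_integral \<alpha> \<phi> lam)
           \<le> 10 * A * exp 1 * (2 * real d) ^ (CARD('n) - 1) * lam powr (- 1 / real d)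
               * ln lam ^ (card {j. \<alpha> j = d} - 1)"
proof -
  define \<theta> where "\<theta> = 1 - 1 / ln lam"
  have "ln lam > 1"
    using lam by (metis ln_exp ln_less_cancel_iff exp_gt_zero less_trans)
  then have \<theta>: "0 \<le> \<theta>" "\<theta> < 1"
    by (auto simp: \<theta>_def)
  have "lam > 0"
    using lam exp_gt_zero[of 1] by linarith
  define K where "K = 10 * A * lam powr (- \<theta> / real d)"
  define Q where "Q = (2 * real d) ^ (CARD('n) - 1) * ln lam ^ (card {j. \<alpha> j = d} - 1)"
  have "norm (osc_integral \<alpha> \<phi> lam) \<le> K * (\<Prod>j\<in>UNIV - {k}. 2 / (1 - real (\<alpha> j) * \<theta> / real d))"
    unfolding K_def using \<open>lam > 0\<close> \<theta> A by (intro norm_osc_integral_le_prod[where \<alpha> = \<alpha> and k = k, OF sm d \<alpha>k \<alpha>_le _ _ _ _ supp bound])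
  also have "\<dots> \<le> K * Q"
    unfolding Q_def \<theta>_def using A lam d \<alpha>k \<alpha>_le
    by (intro mult_left_mono prod_interpolation_factors_le) (auto simp: K_def)
  also have "\<dots> \<le> 10 * A * (exp 1 * lam powr (- 1 / real d)) * Q"
    unfolding K_def \<theta>_def using A lam d \<open>ln lam > 1\<close>
    by (intro mult_right_mono mult_left_mono powr_neg_exponent_shift_le) (auto simp: Q_def)
  finally show ?thesis
    by (simp add: Q_def mult_ac)
qed

theorem mainTheorem2:
  fixes \<alpha> :: "'n::finite \<Rightarrow> nat" and \<phi> :: "real^'n \<Rightarrow> complex"
  assumes pos: "\<forall>j. \<alpha> j > 0"
    and sm: "smooth \<phi>"
    and supp: "closure {x. \<phi> x \<noteq> 0} \<subseteq> {x. \<forall>j. \<bar>x $ j\<bar> \<le> 1}"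
  shows "\<exists>C. \<forall>\<^sub>F lam in at_top.
           norm (osc_integral \<alpha> \<phi> lam)
             \<le> C * lam powr (- 1 / real (Max (range \<alpha>)))
                 * ln lam ^ (card {j. \<alpha> j = Max (range \<alpha>)} - 1)"
proof -
  define d where "d = Max (range \<alpha>)"
  have "d \<in> range \<alpha>"
    unfolding d_def by (rule Max_in) auto
  then obtain k where \<alpha>k: "\<alpha> k = d"
    by blast
  have \<alpha>_le: "\<alpha> j \<le> d" for j
    by (simp add: d_def)
  have d: "d \<ge> 1"
    using pos[rule_format, of k] \<alpha>k by simp
  have supp': "\<phi> y = 0" if "y \<notin> cbox (- 1) 1" for y
    by (rule zero_outside_closure_support[OF supp]) (use that in \<open>simp add: mem_cbox_minus_one_one_cart\<close>)
  obtain A where A: "A > 0"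
    and bound: "\<And>y. y \<in> cbox (- 1) 1 \<Longrightarrow> norm (\<phi> y) \<le> A \<and> norm (iter_dderiv [axis k 1] \<phi> y) \<le> A"
    using smooth_bounded_on_compact[OF sm compact_cbox] by blast
  have "\<forall>\<^sub>F lam in at_top. norm (osc_integral \<alpha> \<phi> lam)
               \<le> 10 * A * exp 1 * (2 * real d) ^ (CARD('n) - 1) * lam powr (- 1 / real d)
                   * ln lam ^ (card {j. \<alpha> j = d} - 1)"
    using eventually_gt_at_top[of "exp 1"]
    by eventually_elim (rule norm_osc_integral_le_log[where \<alpha> = \<alpha> and k = k, OF sm d \<alpha>k \<alpha>_le _ A supp' bound])
  then show ?thesis
    unfolding d_def by blast
qed

end
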